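(* Let $G$ be a graph and let $X,Y\subset V(G)$. Suppose that $X$ is $\alpha$-cut-linked in $G$ for some $\alpha>0$, and that there exists a collection $\mathcal{Q}$ of pairwise vertex-disjoint paths in $G$ between $X$ and $Y$ with $|\mathcal{Q}|=|Y|$. Then $Y$ is $\min\{1/2,\alpha/2\}$-cut-linked in $G$.
   Context: A set $X\subseteq V(G)$ is $\alpha$-cut-linked in $G$ if for every partition of $V(G)$ into $\{A,B\}$ we have $|E(A,B)|\geq\alpha\cdot\min\{|A\cap X|,|B\cap X|\}$, where $E(A,B)$ is the set of edges between $A$ and $B$. *)

theory Defs
  imports Main "HOL-Library.Extended_Real" Complex_Main
begin

definition graph :: "'a set \<Rightarrow> ('a \<Rightarrow> 'a \<Rightarrow> bool) \<Rightarrow> bool" where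
  "graph V E \<longleftrightarrow> finite V \<and> (\<forall>u v. E u v \<longrightarrow> u \<in> V \<and> v \<in> V \<and> u \<noteq> v \<and> E v u)"

definition cut_edges :: "('a \<Rightarrow> 'a \<Rightarrow> bool) \<Rightarrow> 'a set \<Rightarrow> 'a set \<Rightarrow> ('a \<times> 'a) set" where
  "cut_edges E A B = {(a, b). a \<in> A \<and> b \<in> B \<and> E a b}"

definition cut_linked :: "'a set \<Rightarrow> ('a \<Rightarrow> 'a \<Rightarrow> bool) \<Rightarrow> real \<Rightarrow> 'a set \<Rightarrow> bool" where
  "cut_linked V E \<alpha> X \<longleftrightarrow>
     (\<forall>A B. A \<union> B = V \<and> A \<inter> B = {} \<longrightarrow>
        real (card (cut_edges E A B)) \<ge> \<alpha> * real (min (card (A \<inter> X)) (card (B \<inter> X))))"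

definition is_path :: "'a set \<Rightarrow> ('a \<Rightarrow> 'a \<Rightarrow> bool) \<Rightarrow> 'a list \<Rightarrow> bool" where
  "is_path V E p \<longleftrightarrow> p \<noteq> [] \<and> distinct p \<and> set p \<subseteq> V \<and>
     (\<forall>i. Suc i < length p \<longrightarrow> E (p ! i) (p ! Suc i))"

definition path_between :: "'a set \<Rightarrow> ('a \<Rightarrow> 'a \<Rightarrow> bool) \<Rightarrow> 'a set \<Rightarrow> 'a set \<Rightarrow> 'a list \<Rightarrow> bool" where
  "path_between V E X Y p \<longleftrightarrow> is_path V E p \<and>
     ((hd p \<in> X \<and> last p \<in> Y) \<or> (hd p \<in> Y \<and> last p \<in> X))"

end

theory Submission
  imports Defs
begin

text \<open>Every vertex of Y is the Y-end of exactly one path of Q, since the paths are disjoint and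
  there are as many paths as vertices of Y. A path that stays inside A
  contributes its Y-end to A and its X-end to A, so |A \<inter> Y| \<le> |A \<inter> X| + c, where c is the
  number of paths meeting both sides; the same holds for B. Each such path contains the tail of
  a cut edge, and disjointness makes these edges distinct, so |E(A,B)| \<ge> c. If 2c \<ge>
  min(|A \<inter> Y|, |B \<inter> Y|) this already gives the claim with factor 1/2; otherwise at least
  half of that minimum survives on the X-side and the \<alpha>-cut-linkedness of X gives factor \<alpha>/2.\<close>

definition crossing_paths :: "'a set \<Rightarrow> 'a set \<Rightarrow> 'a list set \<Rightarrow> 'a list set" where
  "crossing_paths A B Q = {p \<in> Q. \<not> set p \<subseteq> A \<and> \<not> set p \<subseteq> B}"

lemma crossing_paths_commute: "crossing_paths A B Q = crossing_paths B A Q"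
  unfolding crossing_paths_def by blast

lemma nth_exit_step:
  assumes "P (xs ! 0)" "j < length xs" "\<not> P (xs ! j)"
  shows "\<exists>i. Suc i < length xs \<and> P (xs ! i) \<and> \<not> P (xs ! Suc i)"
  using assms(2,3)
proof (induction j)
  case 0
  then show ?case using assms(1) by simp
next
  case (Suc j)
  then show ?case by (cases "P (xs ! j)") auto
qed

lemma inj_on_pick_from_disjoint:
  assumes "\<forall>p\<in>Q. \<forall>q\<in>Q. p \<noteq> q \<longrightarrow> S p \<inter> S q = {}" and "\<forall>p\<in>Q. f p \<in> S p"
  shows "inj_on f Q"
  using assms unfolding inj_on_def by (metis disjoint_iff)

lemma path_leaving_side_has_cut_edge:
  assumes "is_path V E p" and "set p \<subseteq> A \<union> B" and "A \<inter> B = {}"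
    and "p ! 0 \<in> A" and "\<not> set p \<subseteq> A"
  shows "\<exists>i. Suc i < length p \<and> (p ! i, p ! Suc i) \<in> cut_edges E A B"
proof -
  obtain j where "j < length p" "p ! j \<notin> A"
    using assms(5) by (metis in_set_conv_nth subsetI)
  then obtain i where i: "Suc i < length p" "p ! i \<in> A" "p ! Suc i \<notin> A"
    using nth_exit_step[of "\<lambda>v. v \<in> A" p j] assms(4) by blast
  then have "p ! Suc i \<in> B"
    using assms(2) nth_mem by blast
  moreover have "E (p ! i) (p ! Suc i)"
    using assms(1) i(1) unfolding is_path_def by blast
  ultimately show ?thesis
    using i unfolding cut_edges_def by blast
qed

lemma crossing_path_has_cut_edge:
  assumes "graph V E" and "is_path V E p" and "A \<union> B = V" and "A \<inter> B = {}"
    and "\<not> set p \<subseteq> A" and "\<not> set p \<subseteq> B"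
  shows "\<exists>e\<in>cut_edges E A B. fst e \<in> set p"
proof -
  have sub: "set p \<subseteq> A \<union> B" and "p ! 0 \<in> set p"
    using assms(2,3) unfolding is_path_def by auto
  then consider "p ! 0 \<in> A" | "p ! 0 \<in> B" by blast
  then show ?thesis
  proof cases
    case 1
    then obtain i where "Suc i < length p" "(p ! i, p ! Suc i) \<in> cut_edges E A B"
      using path_leaving_side_has_cut_edge[OF assms(2) sub assms(4)] assms(5) by blast
    then show ?thesis by force
  next
    case 2
    have "set p \<subseteq> B \<union> A" "B \<inter> A = {}" using sub assms(4) by auto
    then obtain i where i: "Suc i < length p" "(p ! i, p ! Suc i) \<in> cut_edges E B A"
      using path_leaving_side_has_cut_edge[OF assms(2)] 2 assms(6) by blast
    then have "(p ! Suc i, p ! i) \<in> cut_edges E A B"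
      using assms(1) unfolding cut_edges_def graph_def by blast
    then show ?thesis using i(1) by force
  qed
qed

lemma card_crossing_paths_le_cut:
  assumes "graph V E" and "A \<union> B = V" and "A \<inter> B = {}"
    and "\<forall>p\<in>Q. is_path V E p"
    and "\<forall>p\<in>Q. \<forall>q\<in>Q. p \<noteq> q \<longrightarrow> set p \<inter> set q = {}"
  shows "card (crossing_paths A B Q) \<le> card (cut_edges E A B)"
proof -
  let ?C = "crossing_paths A B Q"
  have "\<forall>p\<in>?C. \<exists>e. e \<in> cut_edges E A B \<and> fst e \<in> set p"
    using crossing_path_has_cut_edge[OF assms(1) _ assms(2,3)] assms(4)
    unfolding crossing_paths_def by blast
  then obtain edge where edge: "\<forall>p\<in>?C. edge p \<in> cut_edges E A B \<and> fst (edge p) \<in> set p"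
    by metis
  have "inj_on (fst \<circ> edge) ?C"
    using edge assms(5) by (intro inj_on_pick_from_disjoint[of _ set]) (auto simp: crossing_paths_def)
  then have "inj_on edge ?C"
    using inj_on_imageI2 by blast
  moreover have "finite (cut_edges E A B)"
    using assms(1,2) finite_subset[of "cut_edges E A B" "V \<times> V"]
    unfolding graph_def cut_edges_def by auto
  ultimately show ?thesis
    using edge card_inj_on_le by blast
qed

lemma card_Int_Y_le_card_Int_X_plus_crossing:
  assumes "finite Q" and "finite X" and "A \<inter> B = {}"
    and "\<forall>p\<in>Q. \<forall>q\<in>Q. p \<noteq> q \<longrightarrow> set p \<inter> set q = {}"
    and yend: "\<forall>p\<in>Q. yend p \<in> Y \<inter> set p" and xend: "\<forall>p\<in>Q. xend p \<in> X \<inter> set p"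
    and "Y \<subseteq> yend ` Q"
  shows "card (A \<inter> Y) \<le> card (A \<inter> X) + card (crossing_paths A B Q)"
proof -
  let ?QA = "{p \<in> Q. set p \<subseteq> A}" and ?C = "crossing_paths A B Q"
  have fin: "finite (?QA \<union> ?C)"
    using assms(1) unfolding crossing_paths_def by auto
  have "A \<inter> Y \<subseteq> yend ` (?QA \<union> ?C)"
  proof
    fix y assume y: "y \<in> A \<inter> Y"
    then obtain p where "p \<in> Q" "y = yend p" using assms(7) by blast
    moreover have "\<not> set p \<subseteq> B" using y yend assms(3) calculation by blast
    ultimately show "y \<in> yend ` (?QA \<union> ?C)" unfolding crossing_paths_def by blast
  qed
  then have "card (A \<inter> Y) \<le> card (yend ` (?QA \<union> ?C))"
    using fin by (simp add: card_mono)
  also have "\<dots> \<le> card ?QA + card ?C"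
    using card_image_le[OF fin, of yend] card_Un_le[of ?QA ?C] by linarith
  also have "card ?QA \<le> card (A \<inter> X)"
  proof (rule card_inj_on_le)
    show "inj_on xend ?QA"
      using assms(4) xend by (intro inj_on_pick_from_disjoint[of _ set]) auto
    show "xend ` ?QA \<subseteq> A \<inter> X" using xend by auto
    show "finite (A \<inter> X)" using assms(2) by simp
  qed
  finally show ?thesis by simp
qed

lemma disjoint_paths_between_ends:
  assumes "finite Y" and "\<forall>p\<in>Q. path_between V E X Y p"
    and "\<forall>p\<in>Q. \<forall>q\<in>Q. p \<noteq> q \<longrightarrow> set p \<inter> set q = {}"
    and "card Q = card Y"
  obtains yend xend where "\<forall>p\<in>Q. yend p \<in> Y \<inter> set p" and "\<forall>p\<in>Q. xend p \<in> X \<inter> set p"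
    and "Y \<subseteq> yend ` Q"
proof -
  have "\<forall>p\<in>Q. (\<exists>y. y \<in> Y \<inter> set p) \<and> (\<exists>x. x \<in> X \<inter> set p)"
    using assms(2) unfolding path_between_def is_path_def by (metis IntI hd_in_set last_in_set)
  then obtain yend xend where yend: "\<forall>p\<in>Q. yend p \<in> Y \<inter> set p"
    and xend: "\<forall>p\<in>Q. xend p \<in> X \<inter> set p" by metis
  have "inj_on yend Q"
    using assms(3) yend by (intro inj_on_pick_from_disjoint[of _ set]) auto
  then have "card (yend ` Q) = card Y" using card_image assms(4) by metis
  then have "Y \<subseteq> yend ` Q" using card_subset_eq[OF assms(1)] yend by blast
  then show ?thesis using that yend xend by blast
qed

lemma min_half_bound:
  fixes \<alpha> c e m m' :: real
  assumes "\<alpha> \<ge> 0" and "m \<ge> 0" and "c \<le> e" and "\<alpha> * m' \<le> e" and "m \<le> m' + c"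
  shows "min (1/2) (\<alpha>/2) * m \<le> e"
proof (cases "m \<le> 2 * c")
  case True
  have "min (1/2) (\<alpha>/2) * m \<le> 1/2 * m" using assms(2) by (intro mult_right_mono) auto
  then show ?thesis using True assms(3) by linarith
next
  case False
  have "min (1/2) (\<alpha>/2) * m \<le> \<alpha> / 2 * m" using assms(2) by (intro mult_right_mono) auto
  also have "\<dots> \<le> \<alpha> * m'"
    using False assms(1,5) mult_left_mono[of "m / 2" m' \<alpha>] by (simp add: algebra_simps)
  finally show ?thesis using assms(4) by linarith
qed

theorem lemma11:
  fixes V :: "'a set" and E :: "'a \<Rightarrow> 'a \<Rightarrow> bool" and X Y :: "'a set"
    and \<alpha> :: real and Q :: "'a list set"
  assumes "graph V E"
    and "X \<subseteq> V" and "Y \<subseteq> V"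
    and "\<alpha> > 0"
    and "cut_linked V E \<alpha> X"
    and "\<forall>p\<in>Q. path_between V E X Y p"
    and "\<forall>p\<in>Q. \<forall>q\<in>Q. p \<noteq> q \<longrightarrow> set p \<inter> set q = {}"
    and "card Q = card Y"
  shows "cut_linked V E (min (1/2) (\<alpha>/2)) Y"
proof (cases "Y = {}")
  case True
  then show ?thesis by (simp add: cut_linked_def)
next
  case False
  have "finite V" using assms(1) unfolding graph_def by blast
  then have fX: "finite X" and fY: "finite Y" using assms(2,3) finite_subset by auto
  then have fQ: "finite Q" using assms(8) False card_eq_0_iff by force
  have paths: "\<forall>p\<in>Q. is_path V E p" using assms(6) unfolding path_between_def by blast
  obtain yend xend where yend: "\<forall>p\<in>Q. yend p \<in> Y \<inter> set p"
    and xend: "\<forall>p\<in>Q. xend p \<in> X \<inter> set p" and surj: "Y \<subseteq> yend ` Q"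
    using disjoint_paths_between_ends[OF fY assms(6-8)] .
  show ?thesis unfolding cut_linked_def
  proof (intro allI impI)
    fix A B assume AB: "A \<union> B = V \<and> A \<inter> B = {}"
    let ?c = "card (crossing_paths A B Q)"
    have "card (A \<inter> Y) \<le> card (A \<inter> X) + ?c" "card (B \<inter> Y) \<le> card (B \<inter> X) + ?c"
      using card_Int_Y_le_card_Int_X_plus_crossing[OF fQ fX _ assms(7) yend xend surj] AB
        crossing_paths_commute[of B A Q] by (metis inf_commute)+
    then have "min (card (A \<inter> Y)) (card (B \<inter> Y)) \<le> min (card (A \<inter> X)) (card (B \<inter> X)) + ?c"
      by linarith
    then show "min (1/2) (\<alpha>/2) * real (min (card (A \<inter> Y)) (card (B \<inter> Y)))
        \<le> real (card (cut_edges E A B))"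
      using assms(4,5) AB card_crossing_paths_le_cut[OF assms(1) _ _ paths assms(7), of A B]
      by (intro min_half_bound[where c = "real ?c"]) (auto simp: cut_linked_def)
  qed
qed

end
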